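(* Let $\mathscr{M}_n$ be the monoid of multipermutations on $[n]$, let $D$ be a $\mathcal{D}$-class of $\mathscr{M}_n$ containing a prime element, and let $T$ be a generating set of the monoid $\mathscr{M}_n$. Then $D\cap T\neq\emptyset$.
   Context: A multipermutation on $[n]$ is a binary relation on $[n]$ in which every element has at least one successor and at least one predecessor (equivalently an $n\times n$ Boolean matrix with no zero row or column); $\mathscr{M}_n$ is the monoid of these under composition of relations (Boolean matrix multiplication), a submonoid of the monoid $\mathcal{B}_n$ of all binary relations on $[n]$. An element $\alpha\in\mathcal{B}_n$ is prime if it is not a permutation and whenever $\alpha=\beta\gamma$ with $\beta,\gamma\in\mathcal{B}_n$, one of $\beta,\gamma$ is a permutation. $\mathcal{D}$ denotes Green's $\mathcal{D}$-relation of $\mathscr{M}_n$. *)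

theory Defs
  imports Main
begin

text \<open>Binary relations on [n] are modelled as relations on {..<n}, i.e. subsets of
  {..<n} \<times> {..<n}; the product of relations (Boolean matrix product) is relcomp (O).\<close>

definition brel :: "nat \<Rightarrow> nat rel set" where
  "brel n = {R. R \<subseteq> {..<n} \<times> {..<n}}"

definition is_multiperm :: "nat \<Rightarrow> nat rel \<Rightarrow> bool" where
  "is_multiperm n R \<longleftrightarrow> R \<in> brel n \<and>
     (\<forall>i<n. (\<exists>j. (i, j) \<in> R)) \<and> (\<forall>j<n. (\<exists>i. (i, j) \<in> R))"

definition multiperms :: "nat \<Rightarrow> nat rel set" where
  "multiperms n = {R. is_multiperm n R}"

definition is_perm_rel :: "nat \<Rightarrow> nat rel \<Rightarrow> bool" where
  "is_perm_rel n R \<longleftrightarrow> R \<in> brel n \<and>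
     (\<forall>i<n. \<exists>!j. (i, j) \<in> R) \<and> (\<forall>j<n. \<exists>!i. (i, j) \<in> R)"

definition is_prime_rel :: "nat \<Rightarrow> nat rel \<Rightarrow> bool" where
  "is_prime_rel n a \<longleftrightarrow> a \<in> brel n \<and> \<not> is_perm_rel n a \<and>
     (\<forall>b \<in> brel n. \<forall>c \<in> brel n. a = b O c \<longrightarrow> is_perm_rel n b \<or> is_perm_rel n c)"

definition greenL :: "nat \<Rightarrow> nat rel \<Rightarrow> nat rel \<Rightarrow> bool" where
  "greenL n a b \<longleftrightarrow> a \<in> multiperms n \<and> b \<in> multiperms n \<and>
     (a = b \<or> (\<exists>x \<in> multiperms n. a = x O b)) \<and> (b = a \<or> (\<exists>y \<in> multiperms n. b = y O a))"

definition greenR :: "nat \<Rightarrow> nat rel \<Rightarrow> nat rel \<Rightarrow> bool" where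
  "greenR n a b \<longleftrightarrow> a \<in> multiperms n \<and> b \<in> multiperms n \<and>
     (a = b \<or> (\<exists>x \<in> multiperms n. a = b O x)) \<and> (b = a \<or> (\<exists>y \<in> multiperms n. b = a O y))"

definition greenD :: "nat \<Rightarrow> nat rel \<Rightarrow> nat rel \<Rightarrow> bool" where
  "greenD n a b \<longleftrightarrow> (\<exists>c. greenL n a c \<and> greenR n c b)"

definition is_D_class :: "nat \<Rightarrow> nat rel set \<Rightarrow> bool" where
  "is_D_class n D \<longleftrightarrow> (\<exists>a \<in> multiperms n. D = {b. greenD n a b})"

inductive_set gen_monoid :: "nat \<Rightarrow> nat rel set \<Rightarrow> nat rel set" for n T where
  gen_id: "Id_on {..<n} \<in> gen_monoid n T"
| gen_base: "t \<in> T \<Longrightarrow> t \<in> gen_monoid n T"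
| gen_mult: "x \<in> gen_monoid n T \<Longrightarrow> y \<in> gen_monoid n T \<Longrightarrow> x O y \<in> gen_monoid n T"

definition generates :: "nat \<Rightarrow> nat rel set \<Rightarrow> bool" where
  "generates n T \<longleftrightarrow> T \<subseteq> multiperms n \<and> gen_monoid n T = multiperms n"

end

theory Submission
  imports Defs
begin

text \<open>Write the prime p as a product of generators. Splitting the product anywhere, one side
  must be a permutation since p is prime; absorbing that side into a permutation factor and
  recursing on the other side shows p = \<alpha> t \<beta> with \<alpha>, \<beta> permutations and t \<in> T. Multiplying
  by permutations on either side does not leave a D-class, so t lies in the D-class of p.\<close>

lemma Id_on_relcomp_brel: "R \<in> brel n \<Longrightarrow> Id_on {..<n} O R = R"
  unfolding brel_def by blast

lemma relcomp_Id_on_brel: "R \<in> brel n \<Longrightarrow> R O Id_on {..<n} = R"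
  unfolding brel_def by blast

lemma multiperms_iff_Domain_Range:
  "R \<in> multiperms n \<longleftrightarrow> Domain R = {..<n} \<and> Range R = {..<n}"
  unfolding multiperms_def is_multiperm_def brel_def by (auto 0 3)

lemma multiperms_brel: "R \<in> multiperms n \<Longrightarrow> R \<in> brel n"
  unfolding multiperms_def is_multiperm_def by blast

lemma Id_on_multiperms: "Id_on {..<n} \<in> multiperms n"
  by (simp add: multiperms_iff_Domain_Range)

lemma multiperms_relcomp:
  assumes "a \<in> multiperms n" "b \<in> multiperms n"
  shows "a O b \<in> multiperms n"
proof -
  have "Range a = Domain b"
    using assms by (simp add: multiperms_iff_Domain_Range)
  then have "Domain (a O b) = Domain a" "Range (a O b) = Range b"
    by blast+
  with assms show ?thesis
    by (simp add: multiperms_iff_Domain_Range)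
qed

lemma multiperms_converse: "R \<in> multiperms n \<Longrightarrow> R\<inverse> \<in> multiperms n"
  by (simp add: multiperms_iff_Domain_Range)

lemma gen_monoid_subset_multiperms:
  assumes "T \<subseteq> multiperms n"
  shows "gen_monoid n T \<subseteq> multiperms n"
proof
  fix x
  assume "x \<in> gen_monoid n T"
  then show "x \<in> multiperms n"
    by induction (use assms in \<open>auto simp: Id_on_multiperms multiperms_relcomp\<close>)
qed

lemma is_perm_rel_iff_single_valued:
  "is_perm_rel n R \<longleftrightarrow> R \<in> multiperms n \<and> single_valued R \<and> single_valued (R\<inverse>)"
  unfolding is_perm_rel_def multiperms_def is_multiperm_def single_valued_def brel_def by blast

lemma perm_rel_multiperms: "is_perm_rel n \<alpha> \<Longrightarrow> \<alpha> \<in> multiperms n"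
  by (simp add: is_perm_rel_iff_single_valued)

lemma perm_rel_brel: "is_perm_rel n \<alpha> \<Longrightarrow> \<alpha> \<in> brel n"
  by (simp add: perm_rel_multiperms multiperms_brel)

lemma perm_rel_Id_on: "is_perm_rel n (Id_on {..<n})"
  by (simp add: is_perm_rel_iff_single_valued Id_on_multiperms)

lemma perm_rel_relcomp: "is_perm_rel n \<alpha> \<Longrightarrow> is_perm_rel n \<beta> \<Longrightarrow> is_perm_rel n (\<alpha> O \<beta>)"
  by (simp add: is_perm_rel_iff_single_valued multiperms_relcomp single_valued_relcomp
      converse_relcomp)

lemma perm_rel_converse: "is_perm_rel n \<alpha> \<Longrightarrow> is_perm_rel n (\<alpha>\<inverse>)"
  by (simp add: is_perm_rel_iff_single_valued multiperms_converse)

lemma perm_rel_converse_relcomp_cancel: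
  assumes "is_perm_rel n \<alpha>"
  shows "\<alpha>\<inverse> O \<alpha> = Id_on {..<n}"
proof -
  have "single_valued \<alpha>" "Range \<alpha> = {..<n}"
    using assms by (simp_all add: is_perm_rel_iff_single_valued multiperms_iff_Domain_Range)
  then show ?thesis
    unfolding single_valued_def by blast
qed

lemma perm_rel_relcomp_converse_cancel: "is_perm_rel n \<alpha> \<Longrightarrow> \<alpha> O \<alpha>\<inverse> = Id_on {..<n}"
  using perm_rel_converse_relcomp_cancel[of n "\<alpha>\<inverse>"] by (simp add: perm_rel_converse)

lemma perm_rel_cancel_both_sides:
  assumes "is_perm_rel n \<alpha>" "is_perm_rel n \<beta>" "R \<in> brel n"
  shows "\<alpha>\<inverse> O (\<alpha> O R O \<beta>) O \<beta>\<inverse> = R"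
proof -
  have "\<alpha>\<inverse> O (\<alpha> O R O \<beta>) O \<beta>\<inverse> = (\<alpha>\<inverse> O \<alpha>) O R O (\<beta> O \<beta>\<inverse>)"
    by (simp add: O_assoc)
  with assms show ?thesis
    by (simp add: perm_rel_converse_relcomp_cancel perm_rel_relcomp_converse_cancel
        Id_on_relcomp_brel relcomp_Id_on_brel)
qed

lemma prime_perm_multiple_of_generator:
  assumes "x \<in> gen_monoid n T" "T \<subseteq> multiperms n"
    and "is_perm_rel n \<sigma>" "is_perm_rel n \<tau>" "is_prime_rel n (\<sigma> O x O \<tau>)"
  shows "\<exists>t\<in>T. \<exists>\<alpha> \<beta>. is_perm_rel n \<alpha> \<and> is_perm_rel n \<beta> \<and> \<sigma> O x O \<tau> = \<alpha> O t O \<beta>"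
  using assms(1,3-5)
proof (induction arbitrary: \<sigma> \<tau> rule: gen_monoid.induct)
  case gen_id
  then have "is_perm_rel n (\<sigma> O Id_on {..<n} O \<tau>)"
    by (simp add: Id_on_relcomp_brel perm_rel_brel perm_rel_relcomp)
  with gen_id.prems(3) show ?case
    by (simp add: is_prime_rel_def)
next
  case (gen_base t)
  then show ?case by blast
next
  case (gen_mult x y)
  have "x \<in> brel n" "y \<in> brel n"
    using gen_mult.hyps assms(2) gen_monoid_subset_multiperms multiperms_brel by blast+
  then have "\<sigma> O x \<in> brel n" "y O \<tau> \<in> brel n"
    using gen_mult.prems(1,2) perm_rel_brel unfolding brel_def by blast+
  moreover have "\<sigma> O (x O y) O \<tau> = (\<sigma> O x) O (y O \<tau>)"
    by (simp add: O_assoc)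
  ultimately have "is_perm_rel n (\<sigma> O x) \<or> is_perm_rel n (y O \<tau>)"
    using gen_mult.prems(3) unfolding is_prime_rel_def by metis
  then show ?case
  proof
    assume \<sigma>x: "is_perm_rel n (\<sigma> O x)"
    have "is_prime_rel n ((\<sigma> O x) O y O \<tau>)"
      using gen_mult.prems(3) by (simp add: O_assoc)
    from gen_mult.IH(2)[OF \<sigma>x gen_mult.prems(2) this] show ?case
      by (simp add: O_assoc)
  next
    assume y\<tau>: "is_perm_rel n (y O \<tau>)"
    have "is_prime_rel n (\<sigma> O x O (y O \<tau>))"
      using gen_mult.prems(3) by (simp add: O_assoc)
    from gen_mult.IH(1)[OF gen_mult.prems(1) y\<tau> this] show ?case
      by (simp add: O_assoc)
  qed
qed

lemma greenL_iff:
  "greenL n a b \<longleftrightarrow> a \<in> multiperms n \<and> b \<in> multiperms n \<and>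
     (\<exists>x \<in> multiperms n. a = x O b) \<and> (\<exists>y \<in> multiperms n. b = y O a)"
  unfolding greenL_def
  by (metis Id_on_multiperms Id_on_relcomp_brel multiperms_brel)

lemma greenR_iff:
  "greenR n a b \<longleftrightarrow> a \<in> multiperms n \<and> b \<in> multiperms n \<and>
     (\<exists>x \<in> multiperms n. a = b O x) \<and> (\<exists>y \<in> multiperms n. b = a O y)"
  unfolding greenR_def
  by (metis Id_on_multiperms relcomp_Id_on_brel multiperms_brel)

lemma greenL_perm_left_mult:
  assumes "greenL n a c" "is_perm_rel n \<alpha>"
  shows "greenL n a (\<alpha> O c)"
proof -
  obtain x y where x: "x \<in> multiperms n" "a = x O c" and y: "y \<in> multiperms n" "c = y O a"
    and "a \<in> multiperms n" "c \<in> multiperms n"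
    using assms(1) unfolding greenL_iff by blast
  have \<alpha>: "\<alpha> \<in> multiperms n" "\<alpha>\<inverse> \<in> multiperms n"
    using assms(2) perm_rel_converse perm_rel_multiperms by blast+
  have "\<alpha>\<inverse> O \<alpha> O c = c"
    using assms(2) \<open>c \<in> multiperms n\<close>
    by (simp add: O_assoc[symmetric] perm_rel_converse_relcomp_cancel Id_on_relcomp_brel
        multiperms_brel)
  then have "a = (x O \<alpha>\<inverse>) O (\<alpha> O c)"
    using x by (simp add: O_assoc)
  moreover have "\<alpha> O c = (\<alpha> O y) O a"
    using y by (simp add: O_assoc)
  moreover have "x O \<alpha>\<inverse> \<in> multiperms n" "\<alpha> O y \<in> multiperms n" "\<alpha> O c \<in> multiperms n"
    using x(1) y(1) \<alpha> \<open>c \<in> multiperms n\<close> by (simp_all add: multiperms_relcomp)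
  ultimately show ?thesis
    using \<open>a \<in> multiperms n\<close> unfolding greenL_iff by blast
qed

lemma greenR_perm_mult:
  assumes "greenR n c p" "is_perm_rel n \<alpha>" "is_perm_rel n \<beta>"
  shows "greenR n (\<alpha> O c) (\<alpha> O p O \<beta>)"
proof -
  obtain x y where x: "x \<in> multiperms n" "c = p O x" and y: "y \<in> multiperms n" "p = c O y"
    and "c \<in> multiperms n" "p \<in> multiperms n"
    using assms(1) unfolding greenR_iff by blast
  have units: "\<alpha> \<in> multiperms n" "\<beta> \<in> multiperms n" "\<beta>\<inverse> \<in> multiperms n"
    using assms(2,3) perm_rel_converse perm_rel_multiperms by blast+
  have "\<beta> O \<beta>\<inverse> O x = x"
    using assms(3) x(1)
    by (simp add: O_assoc[symmetric] perm_rel_relcomp_converse_cancel Id_on_relcomp_brel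
        multiperms_brel)
  then have "\<alpha> O c = (\<alpha> O p O \<beta>) O (\<beta>\<inverse> O x)"
    using x by (simp add: O_assoc)
  moreover have "\<alpha> O p O \<beta> = (\<alpha> O c) O (y O \<beta>)"
    using y by (simp add: O_assoc)
  moreover have "\<beta>\<inverse> O x \<in> multiperms n" "y O \<beta> \<in> multiperms n"
    "\<alpha> O c \<in> multiperms n" "\<alpha> O p O \<beta> \<in> multiperms n"
    using x(1) y(1) units \<open>c \<in> multiperms n\<close> \<open>p \<in> multiperms n\<close>
    by (simp_all add: multiperms_relcomp)
  ultimately show ?thesis
    unfolding greenR_iff by blast
qed

lemma greenD_perm_mult:
  assumes "greenD n a p" "is_perm_rel n \<alpha>" "is_perm_rel n \<beta>"
  shows "greenD n a (\<alpha> O p O \<beta>)"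
  using assms greenL_perm_left_mult greenR_perm_mult unfolding greenD_def by blast

theorem lemma4p7:
  fixes n :: nat and D T :: "nat rel set"
  assumes "is_D_class n D"
    and "\<exists>p \<in> D. is_prime_rel n p"
    and "generates n T"
  shows "D \<inter> T \<noteq> {}"
proof -
  obtain a where D: "D = {b. greenD n a b}"
    using assms(1) unfolding is_D_class_def by blast
  obtain p where "greenD n a p" and prime: "is_prime_rel n p"
    using assms(2) D by blast
  have T: "T \<subseteq> multiperms n" "gen_monoid n T = multiperms n"
    using assms(3) unfolding generates_def by auto
  have "p \<in> multiperms n"
    using \<open>greenD n a p\<close> unfolding greenD_def greenR_def by blast
  then have "Id_on {..<n} O p O Id_on {..<n} = p"
    by (simp add: Id_on_relcomp_brel relcomp_Id_on_brel multiperms_brel)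
  then obtain t \<alpha> \<beta> where t: "t \<in> T" and units: "is_perm_rel n \<alpha>" "is_perm_rel n \<beta>"
    and p_eq: "p = \<alpha> O t O \<beta>"
    using prime_perm_multiple_of_generator[of p n T "Id_on {..<n}" "Id_on {..<n}"]
      \<open>p \<in> multiperms n\<close> prime T perm_rel_Id_on by auto
  have "t \<in> brel n"
    using t T(1) multiperms_brel by blast
  with units have "t = \<alpha>\<inverse> O p O \<beta>\<inverse>"
    by (simp add: p_eq perm_rel_cancel_both_sides)
  with \<open>greenD n a p\<close> units have "greenD n a t"
    by (simp add: greenD_perm_mult perm_rel_converse)
  with D t show ?thesis by blast
qed

end
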